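(* Let $K_m$ and $L_n$ be regular languages over the same alphabet $\Sigma$ with state complexities $m$ and $n$ respectively. Then the state complexities of $K_m\setminus L_n^R$ and of $L_n^R\setminus K_m$ are each at most $m2^n-(m-1)$, and the state complexity of $K_m\oplus L_n^R$ is at most $m2^n$.
   Context: The state complexity of a regular language is the number of states of its minimal complete deterministic finite automaton. $L^R$ denotes the reversal of $L$, i.e. the set of all words of $L$ written backwards. $K\setminus L$ is set difference and $K\oplus L=(K\setminus L)\cup(L\setminus K)$ is symmetric difference. *)

theory Defs
  imports Main
begin

text \<open>States are natural numbers (any finite DFA can be renamed to such a one).\<close>

definition dfa :: "'a set \<Rightarrow> nat set \<Rightarrow> nat \<Rightarrow> (nat \<Rightarrow> 'a \<Rightarrow> nat) \<Rightarrow> nat set \<Rightarrow> bool" where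
  "dfa Sig Q q0 delta F \<longleftrightarrow>
     finite Q \<and> q0 \<in> Q \<and> (\<forall>q\<in>Q. \<forall>a\<in>Sig. delta q a \<in> Q) \<and> F \<subseteq> Q"

definition dfa_lang :: "'a set \<Rightarrow> nat \<Rightarrow> (nat \<Rightarrow> 'a \<Rightarrow> nat) \<Rightarrow> nat set \<Rightarrow> 'a list set" where
  "dfa_lang Sig q0 delta F = {w \<in> lists Sig. foldl delta q0 w \<in> F}"

definition regular :: "'a set \<Rightarrow> 'a list set \<Rightarrow> bool" where
  "regular Sig L \<longleftrightarrow>
     (\<exists>Q q0 delta F. dfa Sig Q q0 delta F \<and> dfa_lang Sig q0 delta F = L)"

definition state_complexity :: "'a set \<Rightarrow> 'a list set \<Rightarrow> nat" where
  "state_complexity Sig L =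
     (LEAST n. \<exists>Q q0 delta F. dfa Sig Q q0 delta F \<and> dfa_lang Sig q0 delta F = L \<and> card Q = n)"

definition lang_rev :: "'a list set \<Rightarrow> 'a list set" where
  "lang_rev L = rev ` L"

end

theory Submission
  imports Defs
begin

text \<open>
  Let A be a minimal DFA for K (m states) and B one for L (n states).
  Reading a word w, the automaton on pairs (p, S), with p a state of A and S a set of
  states of B, moves p along w in A and replaces S by its preimage under each letter;
  started in (q0 of A, final states of B) it reaches
  (run of A on w, set of B-states from which rev w leads into the final states).
  Hence every Boolean combination of K and the reversal of L is accepted by this
  automaton with m * 2^n states, which gives the bound for the symmetric difference.
  For K minus the reversal of L all pairs (p, Q_B) are rejecting and absorbing, and for
  the reversal of L minus K the same holds for all pairs (p, {}); collapsing these m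
  pairs into one state yields an equivalent automaton with m(2^n - 1) + 1 states.
\<close>

lemma foldl_closed:
  assumes "\<forall>q\<in>Q. \<forall>a\<in>Sig. d q a \<in> Q"
  shows "w \<in> lists Sig \<Longrightarrow> q \<in> Q \<Longrightarrow> foldl d q w \<in> Q"
  using assms by (induction w arbitrary: q) auto

text \<open>A complete finite automaton over any state type accepts a regular language whose
  state complexity is at most its number of states (rename the states to 0, 1, ...).\<close>
lemma automaton_bound:
  fixes Q :: "'b set" and d :: "'b \<Rightarrow> 'a \<Rightarrow> 'b"
  assumes fin: "finite Q" and q0: "q0 \<in> Q" and cl: "\<forall>q\<in>Q. \<forall>a\<in>Sig. d q a \<in> Q"
  shows "regular Sig {w\<in>lists Sig. foldl d q0 w \<in> F}
       \<and> state_complexity Sig {w\<in>lists Sig. foldl d q0 w \<in> F} \<le> card Q"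
proof -
  obtain f where bij: "bij_betw f Q {0..<card Q}" using ex_bij_betw_finite_nat[OF fin] by blast
  define g where "g = inv_into Q f"
  define d' where "d' = (\<lambda>i a. f (d (g i) a))"
  define F' where "F' = f ` (F \<inter> Q)"
  have inj: "inj_on f Q" using bij bij_betw_def by blast
  have gf: "\<And>q. q \<in> Q \<Longrightarrow> g (f q) = q" unfolding g_def using inj by simp
  have run: "\<And>q. q \<in> Q \<Longrightarrow> foldl d' (f q) w = f (foldl d q w)"
    if "w \<in> lists Sig" for w
    using that
  proof (induction w)
    case (Cons a w)
    then have "d q a \<in> Q" using cl by auto
    then show ?case using Cons gf by (simp add: d'_def)
  qed simp
  have dfa: "dfa Sig {0..<card Q} (f q0) d' F'"
    unfolding dfa_def
  proof (intro conjI ballI)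
    show "f q0 \<in> {0..<card Q}" using bij q0 bij_betwE by blast
  next
    fix i a assume i: "i \<in> {0..<card Q}" and a: "a \<in> Sig"
    have "g i \<in> Q" unfolding g_def using bij i by (metis bij_betw_def inv_into_into)
    then show "d' i a \<in> {0..<card Q}" using cl a bij bij_betwE unfolding d'_def by blast
  next
    show "F' \<subseteq> {0..<card Q}" unfolding F'_def using bij bij_betwE by blast
  qed simp
  have lang: "dfa_lang Sig (f q0) d' F' = {w\<in>lists Sig. foldl d q0 w \<in> F}"
    unfolding dfa_lang_def
  proof (intro Collect_cong conj_cong refl)
    fix w assume w: "w \<in> lists Sig"
    have end_in_Q: "foldl d q0 w \<in> Q" using foldl_closed[OF cl w q0] .
    show "(foldl d' (f q0) w \<in> F') = (foldl d q0 w \<in> F)"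
      unfolding run[OF w q0] F'_def using end_in_Q inj by (auto simp: inj_on_image_mem_iff)
  qed
  have "state_complexity Sig {w\<in>lists Sig. foldl d q0 w \<in> F} \<le> card {0..<card Q}"
    unfolding state_complexity_def using dfa lang by (intro Least_le) blast
  then show ?thesis using dfa lang unfolding regular_def by auto
qed

text \<open>Identifying states along a retraction c that is compatible with the transitions
  and with acceptance does not change the language, so the image of c bounds the
  state complexity.\<close>
lemma retraction_bound:
  fixes Q :: "'b set" and d :: "'b \<Rightarrow> 'a \<Rightarrow> 'b"
  assumes fin: "finite Q" and q0: "q0 \<in> Q" and cl: "\<forall>q\<in>Q. \<forall>a\<in>Sig. d q a \<in> Q"
    and cQ: "c ` Q \<subseteq> Q"
    and cd: "\<forall>x\<in>Q. \<forall>a\<in>Sig. c (d (c x) a) = c (d x a)"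
    and cF: "\<forall>x\<in>Q. (c x \<in> F \<longleftrightarrow> x \<in> F)"
  shows "regular Sig {w\<in>lists Sig. foldl d q0 w \<in> F}
       \<and> state_complexity Sig {w\<in>lists Sig. foldl d q0 w \<in> F} \<le> card (c ` Q)"
proof -
  define d' where "d' = (\<lambda>x a. c (d x a))"
  have cl': "\<forall>q\<in>c ` Q. \<forall>a\<in>Sig. d' q a \<in> c ` Q"
    unfolding d'_def using cQ cl by blast
  have run: "\<And>x. x \<in> Q \<Longrightarrow> foldl d' (c x) w = c (foldl d x w)"
    if "w \<in> lists Sig" for w
    using that
  proof (induction w)
    case (Cons a w)
    then have "d x a \<in> Q" "c (d (c x) a) = c (d x a)" using cl cd by auto
    then show ?case using Cons by (simp add: d'_def)
  qed simp
  have lang: "{w\<in>lists Sig. foldl d' (c q0) w \<in> F} = {w\<in>lists Sig. foldl d q0 w \<in> F}"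
  proof (intro Collect_cong conj_cong refl)
    fix w assume w: "w \<in> lists Sig"
    show "(foldl d' (c q0) w \<in> F) = (foldl d q0 w \<in> F)"
      using run[OF w q0] foldl_closed[OF cl w q0] cF by auto
  qed
  show ?thesis
    using automaton_bound[OF finite_imageI[OF fin] imageI[OF q0] cl', of F] lang by simp
qed

lemma minimal_dfa:
  assumes "regular Sig K"
  obtains Q q0 d F where "dfa Sig Q q0 d F" "dfa_lang Sig q0 d F = K"
    "card Q = state_complexity Sig K"
proof -
  have "\<exists>n Q q0 d F. dfa Sig Q q0 d F \<and> dfa_lang Sig q0 d F = K \<and> card Q = n"
    using assms unfolding regular_def by blast
  then have "\<exists>Q q0 d F. dfa Sig Q q0 d F \<and> dfa_lang Sig q0 d F = K
      \<and> card Q = state_complexity Sig K"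
    unfolding state_complexity_def by (rule LeastI_ex)
  then show ?thesis using that by blast
qed

lemma card_collapse_fibre:
  assumes "finite A" "finite B" "T \<in> B"
  shows "card ((\<lambda>(p, S). if S = T then (p0, T) else (p, S)) ` (A \<times> B))
         \<le> card A * (card B - 1) + 1"
proof -
  let ?c = "\<lambda>(p, S). if S = T then (p0, T) else (p, S)"
  have "?c ` (A \<times> B) \<subseteq> A \<times> (B - {T}) \<union> {(p0, T)}" by (auto split: if_splits)
  then have "card (?c ` (A \<times> B)) \<le> card (A \<times> (B - {T}) \<union> {(p0, T)})"
    using assms by (intro card_mono) auto
  also have "\<dots> \<le> card (A \<times> (B - {T})) + card {(p0, T)}" by (rule card_Un_le)
  also have "\<dots> = card A * (card B - 1) + 1"
    using assms by (simp add: card_cartesian_product)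
  finally show ?thesis .
qed

lemma collapsed_count:
  fixes m k :: nat
  assumes "m \<ge> 1"
  shows "m * (2 ^ k - 1) + 1 = m * 2 ^ k - (m - 1)"
proof -
  have "m * (2 ^ k - 1) = m * 2 ^ k - m" by (simp add: diff_mult_distrib2)
  moreover have "m \<le> m * 2 ^ k" by simp
  ultimately show ?thesis using assms by linarith
qed

locale two_dfas =
  fixes Sig :: "'a set"
    and QK :: "nat set" and qK :: nat and dK :: "nat \<Rightarrow> 'a \<Rightarrow> nat" and FK :: "nat set"
    and QL :: "nat set" and qL :: nat and dL :: "nat \<Rightarrow> 'a \<Rightarrow> nat" and FL :: "nat set"
  assumes dfa_K: "dfa Sig QK qK dK FK" and dfa_L: "dfa Sig QL qL dL FL"
begin

definition pre :: "'a \<Rightarrow> nat set \<Rightarrow> nat set" where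
  "pre a S = {q\<in>QL. dL q a \<in> S}"

definition step :: "nat \<times> nat set \<Rightarrow> 'a \<Rightarrow> nat \<times> nat set" where
  "step x a = (dK (fst x) a, pre a (snd x))"

definition states :: "(nat \<times> nat set) set" where
  "states = QK \<times> Pow QL"

definition start :: "nat \<times> nat set" where
  "start = (qK, FL)"

lemma finite_states: "finite states"
  using dfa_K dfa_L unfolding states_def dfa_def by simp

lemma start_in_states: "start \<in> states"
  using dfa_K dfa_L unfolding start_def states_def dfa_def by simp

lemma step_closed: "\<forall>x\<in>states. \<forall>a\<in>Sig. step x a \<in> states"
  using dfa_K unfolding states_def step_def pre_def dfa_def by auto

lemma card_states: "card states = card QK * 2 ^ card QL"
  using dfa_K dfa_L unfolding states_def dfa_def by (simp add: card_cartesian_product card_Pow)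

lemma run_step:
  "w \<in> lists Sig \<Longrightarrow> S \<subseteq> QL
   \<Longrightarrow> foldl step (p, S) w = (foldl dK p w, {q\<in>QL. foldl dL q (rev w) \<in> S})"
proof (induction w arbitrary: p S)
  case (Cons a w)
  have cl: "\<forall>q\<in>QL. \<forall>a\<in>Sig. dL q a \<in> QL" using dfa_L unfolding dfa_def by auto
  have "w \<in> lists Sig" using Cons.prems by simp
  then have "rev w \<in> lists Sig" by (simp add: in_lists_conv_set)
  then have "{q\<in>QL. foldl dL q (rev w) \<in> pre a S} = {q\<in>QL. foldl dL q (rev (a # w)) \<in> S}"
    using foldl_closed[OF cl] Cons.prems unfolding pre_def by auto
  moreover have "pre a S \<subseteq> QL" unfolding pre_def by auto
  ultimately show ?case using Cons by (simp add: step_def)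
qed auto

lemma combination_lang:
  "{w\<in>lists Sig. P (w \<in> dfa_lang Sig qK dK FK) (w \<in> lang_rev (dfa_lang Sig qL dL FL))}
   = {w\<in>lists Sig. foldl step start w \<in> {x. P (fst x \<in> FK) (qL \<in> snd x)}}"
proof (intro Collect_cong conj_cong refl)
  fix w assume w: "w \<in> lists Sig"
  have rw: "rev w \<in> lists Sig" using w by (auto simp: in_lists_conv_set)
  have "w \<in> lang_rev (dfa_lang Sig qL dL FL) \<longleftrightarrow> rev w \<in> dfa_lang Sig qL dL FL"
    unfolding lang_rev_def by (metis image_iff rev_rev_ident)
  moreover have "qL \<in> QL" "FL \<subseteq> QL" using dfa_L unfolding dfa_def by auto
  ultimately show "P (w \<in> dfa_lang Sig qK dK FK) (w \<in> lang_rev (dfa_lang Sig qL dL FL))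
      = (foldl step start w \<in> {x. P (fst x \<in> FK) (qL \<in> snd x)})"
    using w rw run_step[OF w] unfolding start_def dfa_lang_def by auto
qed

lemma combination_bound:
  "regular Sig {w\<in>lists Sig. P (w \<in> dfa_lang Sig qK dK FK) (w \<in> lang_rev (dfa_lang Sig qL dL FL))}
 \<and> state_complexity Sig
     {w\<in>lists Sig. P (w \<in> dfa_lang Sig qK dK FK) (w \<in> lang_rev (dfa_lang Sig qL dL FL))}
   \<le> card QK * 2 ^ card QL"
  unfolding combination_lang card_states[symmetric]
  by (rule automaton_bound[OF finite_states start_in_states step_closed])

lemma collapsed_bound:
  assumes T_fixed: "\<forall>a\<in>Sig. pre a T = T" and T_sub: "T \<subseteq> QL"
    and P_indep: "\<And>b. P b (qL \<in> T) = P False (qL \<in> T)"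
  shows "regular Sig {w\<in>lists Sig. P (w \<in> dfa_lang Sig qK dK FK) (w \<in> lang_rev (dfa_lang Sig qL dL FL))}
 \<and> state_complexity Sig
     {w\<in>lists Sig. P (w \<in> dfa_lang Sig qK dK FK) (w \<in> lang_rev (dfa_lang Sig qL dL FL))}
   \<le> card QK * (2 ^ card QL - 1) + 1"
proof -
  define c where "c = (\<lambda>(p::nat, S). if S = T then (qK, T) else (p, S))"
  have fin: "finite QK" "finite QL" and qK: "qK \<in> QK"
    using dfa_K dfa_L unfolding dfa_def by auto
  have "regular Sig {w\<in>lists Sig. foldl step start w \<in> {x. P (fst x \<in> FK) (qL \<in> snd x)}}
      \<and> state_complexity Sig {w\<in>lists Sig. foldl step start w \<in> {x. P (fst x \<in> FK) (qL \<in> snd x)}}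
        \<le> card (c ` states)"
  proof (rule retraction_bound[OF finite_states start_in_states step_closed])
    show "c ` states \<subseteq> states" unfolding c_def states_def using qK T_sub by (auto split: if_splits)
    show "\<forall>x\<in>states. \<forall>a\<in>Sig. c (step (c x) a) = c (step x a)"
      unfolding c_def states_def step_def using T_fixed by auto
    show "\<forall>x\<in>states. (c x \<in> {x. P (fst x \<in> FK) (qL \<in> snd x)})
        = (x \<in> {x. P (fst x \<in> FK) (qL \<in> snd x)})"
    proof
      fix x assume "x \<in> states"
      show "(c x \<in> {x. P (fst x \<in> FK) (qL \<in> snd x)}) = (x \<in> {x. P (fst x \<in> FK) (qL \<in> snd x)})"
      proof (cases "snd x = T")
        case True
        then show ?thesis unfolding c_def
          using P_indep[of "qK \<in> FK"] P_indep[of "fst x \<in> FK"] by (simp add: case_prod_beta)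
      qed (simp add: c_def case_prod_beta)
    qed
  qed
  moreover have "card (c ` states) \<le> card QK * (2 ^ card QL - 1) + 1"
    using card_collapse_fibre[of QK "Pow QL" T qK] fin T_sub
    unfolding c_def states_def by (simp add: card_Pow)
  ultimately show ?thesis unfolding combination_lang by linarith
qed

lemma pre_all: "\<forall>a\<in>Sig. pre a QL = QL"
  using dfa_L unfolding pre_def dfa_def by auto

lemma pre_empty: "\<forall>a\<in>Sig. pre a {} = {}"
  unfolding pre_def by auto

end

theorem proposition1:
  fixes Sig :: "'a set" and K L :: "'a list set" and m n :: nat
  assumes "finite Sig"
    and "regular Sig K" and "regular Sig L"
    and "state_complexity Sig K = m" and "state_complexity Sig L = n"
  shows "regular Sig (K - lang_rev L)
       \<and> state_complexity Sig (K - lang_rev L) \<le> m * 2 ^ n - (m - 1)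
       \<and> regular Sig (lang_rev L - K)
       \<and> state_complexity Sig (lang_rev L - K) \<le> m * 2 ^ n - (m - 1)
       \<and> regular Sig ((K - lang_rev L) \<union> (lang_rev L - K))
       \<and> state_complexity Sig ((K - lang_rev L) \<union> (lang_rev L - K)) \<le> m * 2 ^ n"
proof -
  obtain QK qK dK FK where dK: "dfa Sig QK qK dK FK" and lK: "dfa_lang Sig qK dK FK = K"
    and cK: "card QK = m" using minimal_dfa[OF assms(2)] assms(4) by metis
  obtain QL qL dL FL where dL: "dfa Sig QL qL dL FL" and lL: "dfa_lang Sig qL dL FL = L"
    and cL: "card QL = n" using minimal_dfa[OF assms(3)] assms(5) by metis
  interpret two_dfas Sig QK qK dK FK QL qL dL FL using dK dL by unfold_locales
  have qL: "qL \<in> QL" and m_pos: "m \<ge> 1"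
    using dK dL cK unfolding dfa_def by (auto simp: Suc_le_eq card_gt_0_iff)
  have words: "K \<subseteq> lists Sig" "lang_rev L \<subseteq> lists Sig"
    using lK lL unfolding dfa_lang_def lang_rev_def by (auto simp: in_lists_conv_set)
  have "K - lang_rev L = {w\<in>lists Sig. w \<in> K \<and> w \<notin> lang_rev L}"
       "lang_rev L - K = {w\<in>lists Sig. w \<in> lang_rev L \<and> w \<notin> K}"
       "(K - lang_rev L) \<union> (lang_rev L - K) = {w\<in>lists Sig. (w \<in> K) \<noteq> (w \<in> lang_rev L)}"
    using words by auto
  moreover note collapsed_bound[OF pre_all subset_refl, of "\<lambda>a b. a \<and> \<not> b"]
    collapsed_bound[OF pre_empty empty_subsetI, of "\<lambda>a b. b \<and> \<not> a"]
    combination_bound[of "\<lambda>a b. a \<noteq> b"]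
  ultimately show ?thesis
    using qL collapsed_count[OF m_pos, of n] unfolding lK lL cK cL by auto
qed

end
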